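(* Let $a<b$, $c<d$, and let $f:[a,b]\times[c,d]\to\mathbb{R}_+$ be a nonnegative function that is convex on the coordinates. Let $n\in\mathbb{N}$ and set $x_k=a+k\frac{b-a}{n}$ and $y_k=c+k\frac{d-c}{n}$ for $k=0,1,\dots,n$. Then \begin{align*} \int_a^b\int_c^d f(x, y)\,dx\,dy &\leq \frac{b-a}{4n}\Big[(n+1)\int_c^d f(a,y)\,dy+(n+1)\int_c^d f(b,y)\,dy+2\sum_{k=1}^{n-1} \int_c^d f(x_k,y)\,dy\Big]\\ &\quad +\frac{d-c}{4n}\Big[(n+1)\int_a^b f(x,c)\,dx+(n+1)\int_a^b f(x,d)\,dx+2\sum_{k=1}^{n-1} \int_a^b f(x,y_k)\,dx\Big]. \end{align*}
   Context: A function $f:[a,b]\times[c,d]\to\mathbb{R}$ is called convex on the coordinates if for every $y\in[c,d]$ the partial map $u\mapsto f(u,y)$ is convex on $[a,b]$, and for every $x\in[a,b]$ the partial map $v\mapsto f(x,v)$ is convex on $[c,d]$. Empty sums are zero. *)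

theory Defs
  imports "HOL-Analysis.Analysis"
begin

definition convex_on_coordinates ::
  "real \<Rightarrow> real \<Rightarrow> real \<Rightarrow> real \<Rightarrow> (real \<Rightarrow> real \<Rightarrow> real) \<Rightarrow> bool" where
  "convex_on_coordinates a b c d f \<longleftrightarrow>
     (\<forall>y\<in>{c..d}. convex_on {a..b} (\<lambda>u. f u y)) \<and>
     (\<forall>x\<in>{a..b}. convex_on {c..d} (\<lambda>v. f x v))"

end

theory Submission
  imports Defs
begin

text \<open>
  For fixed y the map x \<mapsto> f x y is convex, hence lies below its chords. On a column
  [x_k, x_{k+1}] \<times> [c, d] the function f is therefore dominated by the linear interpolation
  in x between the traces f x_k and f x_{k+1}; integrating this continuous majorant by Fubini
  gives the trapezoid bound h/2 (\<integral> f x_k + \<integral> f x_{k+1}) for the column, and summing over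
  the columns gives the composite trapezoid bound. The x-part of the claimed right-hand side is
  the average of this bound for n and for 1 subdivisions, and the y-part is nonnegative.

  Convexity in y only makes the traces continuous on the open interval (c, d), so the majorant
  is integrated over [c + \<epsilon>, d - \<epsilon>]; on the two strips f is bounded by its values at the
  corners, and their contribution vanishes as \<epsilon> \<rightarrow> 0.
\<close>

lemma convex_on_continuous_on_Icc_inner:
  fixes g :: "real \<Rightarrow> real"
  assumes "convex_on {c..d} g" "c < c'" "d' < d"
  shows "continuous_on {c'..d'} g"
proof -
  have "continuous_on {c<..<d} g"
    by (rule convex_on_continuous) (auto intro: convex_on_subset[OF assms(1)])
  then show ?thesis
    by (rule continuous_on_subset) (use assms in auto)
qed

lemma convex_on_nonneg_integrable_on_Icc:
  fixes g :: "real \<Rightarrow> real"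
  assumes "convex_on {p..q} g" "\<forall>t\<in>{p..q}. 0 \<le> g t"
  shows "g integrable_on {p..q}"
proof (cases "p < q")
  case False
  then show ?thesis
    using integrable_on_null[of p q g] by (simp add: content_real_eq_0)
next
  case True
  have "continuous_on {p<..<q} g"
    by (rule convex_on_continuous) (auto intro: convex_on_subset[OF assms(1)])
  then have "g \<in> borel_measurable (lebesgue_on {p<..<q})"
    by (rule continuous_imp_measurable_on_sets_lebesgue) auto
  moreover have "(\<lambda>_. max (g p) (g q)) integrable_on {p<..<q}"
    using integrable_on_Icc_iff_Ioo integrable_const_ivl by blast
  ultimately have "g integrable_on {p<..<q}"
    by (rule measurable_bounded_by_integrable_imp_integrable)
       (use assms convex_on_le_max in \<open>auto\<close>)
  then show ?thesis
    using integrable_on_Icc_iff_Ioo by blast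
qed

lemma separately_convex_le_max_corners:
  fixes f :: "real \<Rightarrow> real \<Rightarrow> real"
  assumes "x \<in> {p..q}" "y \<in> {c..d}"
    and "convex_on {p..q} (\<lambda>x. f x y)" "convex_on {c..d} (f p)" "convex_on {c..d} (f q)"
  shows "f x y \<le> max (max (f p c) (f p d)) (max (f q c) (f q d))"
proof -
  have "f x y \<le> max (f p y) (f q y)" "f p y \<le> max (f p c) (f p d)" "f q y \<le> max (f q c) (f q d)"
    using assms by (auto intro: convex_on_le_max)
  then show ?thesis
    by simp
qed

lemma convex_on_nonneg_integral_subinterval_le:
  fixes g :: "real \<Rightarrow> real"
  assumes "convex_on {c..d} g" "\<forall>t\<in>{c..d}. 0 \<le> g t" "c \<le> c'" "d' \<le> d"
  shows "integral {c'..d'} g \<le> integral {c..d} g"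
proof (rule integral_subset_le)
  have "g integrable_on {c..d}"
    using assms by (intro convex_on_nonneg_integrable_on_Icc)
  then show "g integrable_on {c'..d'}" "g integrable_on {c..d}"
    using assms by (auto intro: integrable_on_subinterval)
qed (use assms in auto)

lemma integral_chord:
  fixes A B p q :: real
  assumes "p \<le> q"
  shows "integral {p..q} (\<lambda>x. (B - A) / (q - p) * (x - p) + A) = (q - p) * (A + B) / 2"
proof (cases "p = q")
  case False
  define s where "s = (B - A) / (q - p)"
  have slope: "s * (q - p) = B - A"
    using False by (simp add: s_def)
  have "((\<lambda>_. A - s * p) has_integral (q - p) * (A - s * p)) {p..q}"
    using has_integral_const_real[of "A - s * p" p q] assms by simp
  then have "((\<lambda>x. s * x + (A - s * p)) has_integral
          s * ((q\<^sup>2 - p\<^sup>2) / 2) + (q - p) * (A - s * p)) {p..q}"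
    using assms by (intro has_integral_add has_integral_mult_right ident_has_integral)
  moreover have "(\<lambda>x. s * (x - p) + A) = (\<lambda>x. s * x + (A - s * p))"
    by (simp add: fun_eq_iff right_diff_distrib)
  ultimately have "integral {p..q} (\<lambda>x. s * (x - p) + A) = s * ((q\<^sup>2 - p\<^sup>2) / 2) + (q - p) * (A - s * p)"
    by (simp add: integral_unique)
  also have "\<dots> = s * (q - p) * (q - p) / 2 + (q - p) * A"
    by (simp add: power2_eq_square field_simps)
  also have "\<dots> = (q - p) * (A + B) / 2"
    unfolding slope by (simp add: field_simps)
  finally show ?thesis
    by (simp add: s_def)
qed simp

lemma integral_cbox_Pair_split_fst:
  fixes P :: "real \<times> real \<Rightarrow> real"
  assumes "a \<le> e" "e \<le> b" and P: "P integrable_on cbox (a, c) (b, d)"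
  shows "integral (cbox (a, c) (b, d)) P = integral (cbox (a, c) (e, d)) P + integral (cbox (e, c) (b, d)) P"
proof -
  have "cbox (a, c) (b, d) = cbox (a, c) (e, d) \<union> cbox (e, c) (b, d)"
    using assms by (auto simp: cbox_Pair_eq)
  moreover have "negligible (cbox (a, c) (e, d) \<inter> cbox (e, c) (b, d))"
  proof (rule negligible_subset)
    show "negligible (cbox (e, c) (e, d))"
      by (simp add: negligible_interval box_eq_empty Basis_prod_def)
  qed (auto simp: cbox_Pair_eq)
  moreover have "P integrable_on cbox (a, c) (e, d)" "P integrable_on cbox (e, c) (b, d)"
    by (rule integrable_on_subcbox[OF P]; use assms in \<open>auto simp: cbox_Pair_eq\<close>)+
  ultimately show ?thesis
    using integral_Un by simp
qed

lemma integral_cbox_Pair_split_snd: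
  fixes P :: "real \<times> real \<Rightarrow> real"
  assumes "c \<le> e" "e \<le> d" and P: "P integrable_on cbox (a, c) (b, d)"
  shows "integral (cbox (a, c) (b, d)) P = integral (cbox (a, c) (b, e)) P + integral (cbox (a, e) (b, d)) P"
proof -
  have "cbox (a, c) (b, d) = cbox (a, c) (b, e) \<union> cbox (a, e) (b, d)"
    using assms by (auto simp: cbox_Pair_eq)
  moreover have "negligible (cbox (a, c) (b, e) \<inter> cbox (a, e) (b, d))"
  proof (rule negligible_subset)
    show "negligible (cbox (a, e) (b, e))"
      by (simp add: negligible_interval box_eq_empty Basis_prod_def)
  qed (auto simp: cbox_Pair_eq)
  moreover have "P integrable_on cbox (a, c) (b, e)" "P integrable_on cbox (a, e) (b, d)"
    by (rule integrable_on_subcbox[OF P]; use assms in \<open>auto simp: cbox_Pair_eq\<close>)+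
  ultimately show ?thesis
    using integral_Un by simp
qed

lemma integral_cbox_Pair_eq_sum_columns:
  fixes P :: "real \<times> real \<Rightarrow> real" and x :: "nat \<Rightarrow> real"
  assumes mono: "\<And>k. x k \<le> x (Suc k)" and P: "P integrable_on cbox (x 0, c) (x n, d)"
  shows "integral (cbox (x 0, c) (x n, d)) P = (\<Sum>k<n. integral (cbox (x k, c) (x (Suc k), d)) P)"
  using P
proof (induction n)
  case (Suc n)
  have "x 0 \<le> x n" "x n \<le> x (Suc n)"
    using lift_Suc_mono_le[of x 0 n] mono by auto
  moreover from this have "P integrable_on cbox (x 0, c) (x n, d)"
    by - (rule integrable_on_subcbox[OF Suc.prems], auto simp: cbox_Pair_eq)
  ultimately show ?case
    using Suc integral_cbox_Pair_split_fst[OF _ _ Suc.prems] by simp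
qed (simp add: integral_null content_Pair)

lemma integral_cbox_Pair_le_inner:
  fixes P :: "real \<times> real \<Rightarrow> real"
  assumes "c \<le> c'" "c' \<le> d'" "d' \<le> d" "a \<le> b"
    and P: "P integrable_on cbox (a, c) (b, d)" and M: "\<forall>z\<in>cbox (a, c) (b, d). P z \<le> M"
  shows "integral (cbox (a, c) (b, d)) P \<le> integral (cbox (a, c') (b, d')) P + M * (b - a) * ((c' - c) + (d - d'))"
proof -
  have sub: "P integrable_on cbox (a, p) (b, q)" "\<forall>z\<in>cbox (a, p) (b, q). P z \<le> M"
    if "c \<le> p" "q \<le> d" for p q
  proof -
    show "P integrable_on cbox (a, p) (b, q)"
      by (rule integrable_on_subcbox[OF P]) (use that in \<open>auto simp: cbox_Pair_eq\<close>)
    show "\<forall>z\<in>cbox (a, p) (b, q). P z \<le> M"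
      using that M by (auto simp: cbox_Pair_eq)
  qed
  have strip: "integral (cbox (a, p) (b, q)) P \<le> M * (b - a) * (q - p)"
    if "c \<le> p" "p \<le> q" "q \<le> d" for p q
  proof -
    have "integral (cbox (a, p) (b, q)) P \<le> integral (cbox (a, p) (b, q)) (\<lambda>_. M)"
      using sub[OF that(1,3)] by (intro integral_le) auto
    also have "\<dots> = M * (b - a) * (q - p)"
      using that assms(4) by (simp add: content_Pair)
    finally show ?thesis .
  qed
  have "integral (cbox (a, c) (b, d)) P
      = integral (cbox (a, c) (b, c')) P + integral (cbox (a, c') (b, d')) P + integral (cbox (a, d') (b, d)) P"
    using integral_cbox_Pair_split_snd[OF _ _ P, of c'] integral_cbox_Pair_split_snd[of c' d' d P a b]
      sub[of c' d] assms by simp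
  then show ?thesis
    using strip[of c c'] strip[of d' d] assms by (simp add: algebra_simps)
qed

lemma sum_trapezoid_weights:
  fixes w :: "nat \<Rightarrow> real"
  assumes "n \<ge> 1"
  shows "(\<Sum>k<n. (w k + w (Suc k)) / 2) = (w 0 + w n) / 2 + (\<Sum>k = 1..n - 1. w k)"
  using assms
proof (induction n rule: nat_induct_at_least)
  case (Suc n)
  have "{1..Suc n - 1} = insert n {1..n - 1}"
    using Suc.hyps by auto
  then show ?case
    using Suc by (simp add: field_simps)
qed simp

lemma integral_column_le_trapezoid_continuous:
  fixes f :: "real \<Rightarrow> real \<Rightarrow> real"
  assumes "p < q"
    and convex: "\<forall>y\<in>{c..d}. convex_on {p..q} (\<lambda>x. f x y)"
    and cont: "continuous_on {c..d} (f p)" "continuous_on {c..d} (f q)"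
    and int: "(\<lambda>(x, y). f x y) integrable_on cbox (p, c) (q, d)"
  shows "integral (cbox (p, c) (q, d)) (\<lambda>(x, y). f x y)
           \<le> (q - p) * (integral {c..d} (f p) + integral {c..d} (f q)) / 2"
proof -
  define L where "L x y = (f q y - f p y) / (q - p) * (x - p) + f p y" for x y
  have L_cont: "continuous_on (cbox (p, c) (q, d)) (\<lambda>(x, y). L x y)"
    unfolding L_def case_prod_beta
    by (intro continuous_intros continuous_on_compose2[OF cont(1)] continuous_on_compose2[OF cont(2)])
       (use \<open>p < q\<close> in \<open>auto simp: cbox_Pair_eq\<close>)
  have "integral (cbox (p, c) (q, d)) (\<lambda>(x, y). f x y) \<le> integral (cbox (p, c) (q, d)) (\<lambda>(x, y). L x y)"
  proof (rule integral_le[OF int integrable_continuous[OF L_cont]])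
    fix z assume "z \<in> cbox (p, c) (q, d)"
    then obtain x y where "z = (x, y)" "x \<in> {p..q}" "y \<in> {c..d}"
      by (auto simp: cbox_Pair_eq)
    then show "(\<lambda>(x, y). f x y) z \<le> (\<lambda>(x, y). L x y) z"
      using convex_onD_Icc'[of p q "\<lambda>x. f x y" x] convex by (simp add: L_def)
  qed
  also have "\<dots> = integral {c..d} (\<lambda>y. integral {p..q} (\<lambda>x. L x y))"
    using integral_prod_continuous[OF L_cont] integral_swap_continuous[OF L_cont] by simp
  also have "\<dots> = integral {c..d} (\<lambda>y. (q - p) / 2 * (f p y + f q y))"
  proof (rule integral_cong)
    fix y
    show "integral {p..q} (\<lambda>x. L x y) = (q - p) / 2 * (f p y + f q y)"
      unfolding L_def using \<open>p < q\<close> by (subst integral_chord) auto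
  qed
  also have "\<dots> = (q - p) * (integral {c..d} (f p) + integral {c..d} (f q)) / 2"
    using integrable_continuous_interval[OF cont(1)] integrable_continuous_interval[OF cont(2)]
    by (simp add: integral_add)
  finally show ?thesis .
qed

lemma integral_column_le_trapezoid:
  fixes f :: "real \<Rightarrow> real \<Rightarrow> real"
  assumes "p < q" "c < d"
    and nonneg: "\<forall>y\<in>{c..d}. 0 \<le> f p y \<and> 0 \<le> f q y"
    and convex_fst: "\<forall>y\<in>{c..d}. convex_on {p..q} (\<lambda>x. f x y)"
    and convex_snd: "convex_on {c..d} (f p)" "convex_on {c..d} (f q)"
    and int: "(\<lambda>(x, y). f x y) integrable_on cbox (p, c) (q, d)"
  shows "integral (cbox (p, c) (q, d)) (\<lambda>(x, y). f x y)
           \<le> (q - p) * (integral {c..d} (f p) + integral {c..d} (f q)) / 2"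
proof -
  define M where "M = max (max (f p c) (f p d)) (max (f q c) (f q d))"
  define T where "T = (q - p) * (integral {c..d} (f p) + integral {c..d} (f q)) / 2"
  have bounded: "\<forall>z\<in>cbox (p, c) (q, d). (\<lambda>(x, y). f x y) z \<le> M"
    using convex_fst convex_snd unfolding M_def
    by (auto simp: cbox_Pair_eq intro!: separately_convex_le_max_corners)
  have approx: "integral (cbox (p, c) (q, d)) (\<lambda>(x, y). f x y) \<le> T + M * (q - p) * (2 * \<epsilon>)"
    if "0 < \<epsilon>" "\<epsilon> < (d - c) / 2" for \<epsilon>
  proof -
    define c' d' where "c' = c + \<epsilon>" and "d' = d - \<epsilon>"
    have inner: "c < c'" "c' < d'" "d' < d"
      using that by (auto simp: c'_def d'_def)
    have trace_le: "integral {c'..d'} (f x) \<le> integral {c..d} (f x)" if "x = p \<or> x = q" for x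
      using that inner nonneg convex_snd by (intro convex_on_nonneg_integral_subinterval_le) auto
    have "integral (cbox (p, c) (q, d)) (\<lambda>(x, y). f x y)
        \<le> integral (cbox (p, c') (q, d')) (\<lambda>(x, y). f x y) + M * (q - p) * ((c' - c) + (d - d'))"
      using inner \<open>p < q\<close> int bounded by (intro integral_cbox_Pair_le_inner) auto
    also have "integral (cbox (p, c') (q, d')) (\<lambda>(x, y). f x y)
        \<le> (q - p) * (integral {c'..d'} (f p) + integral {c'..d'} (f q)) / 2"
    proof (rule integral_column_le_trapezoid_continuous[OF \<open>p < q\<close>])
      show "\<forall>y\<in>{c'..d'}. convex_on {p..q} (\<lambda>x. f x y)"
        using convex_fst inner by auto
      show "continuous_on {c'..d'} (f p)" "continuous_on {c'..d'} (f q)"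
        using convex_snd inner by (auto intro: convex_on_continuous_on_Icc_inner)
      show "(\<lambda>(x, y). f x y) integrable_on cbox (p, c') (q, d')"
        by (rule integrable_on_subcbox[OF int]) (use inner in \<open>auto simp: cbox_Pair_eq\<close>)
    qed
    also have "\<dots> \<le> T"
      unfolding T_def using \<open>p < q\<close> trace_le by (intro divide_right_mono mult_left_mono add_mono) auto
    finally show ?thesis
      by (simp add: c'_def d'_def)
  qed
  have "((\<lambda>\<epsilon>. T + M * (q - p) * (2 * \<epsilon>)) \<longlongrightarrow> T) (at_right 0)"
    by (auto intro!: tendsto_eq_intros)
  moreover have "\<forall>\<^sub>F \<epsilon> in at_right 0. integral (cbox (p, c) (q, d)) (\<lambda>(x, y). f x y) \<le> T + M * (q - p) * (2 * \<epsilon>)"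
    unfolding eventually_at_right_field using approx \<open>c < d\<close> by (intro exI[of _ "(d - c) / 2"]) auto
  ultimately show ?thesis
    unfolding T_def by (rule tendsto_lowerbound) simp
qed

lemma uniform_node_in_Icc:
  fixes p q :: real
  assumes "p \<le> q" "k \<le> n"
  shows "p + real k * (q - p) / real n \<in> {p..q}"
proof (cases "n = 0")
  case False
  have "real k * (q - p) \<le> real n * (q - p)"
    using assms by (intro mult_right_mono) auto
  then have "real k * (q - p) / real n \<le> q - p"
    using False by (simp add: divide_le_eq mult.commute)
  then show ?thesis
    using assms by auto
qed (use assms in auto)

lemma integral_le_trapezoid_partition_fst:
  fixes f :: "real \<Rightarrow> real \<Rightarrow> real" and x :: "nat \<Rightarrow> real"
  assumes "c < d" and step: "\<And>k. x k < x (Suc k)"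
    and nonneg: "\<forall>t\<in>{x 0..x n}. \<forall>y\<in>{c..d}. 0 \<le> f t y"
    and convex_fst: "\<forall>y\<in>{c..d}. convex_on {x 0..x n} (\<lambda>t. f t y)"
    and convex_snd: "\<forall>t\<in>{x 0..x n}. convex_on {c..d} (f t)"
    and int: "(\<lambda>(x, y). f x y) integrable_on cbox (x 0, c) (x n, d)"
  shows "integral (cbox (x 0, c) (x n, d)) (\<lambda>(x, y). f x y)
    \<le> (\<Sum>k<n. (x (Suc k) - x k) * (integral {c..d} (f (x k)) + integral {c..d} (f (x (Suc k)))) / 2)"
proof -
  have "integral (cbox (x 0, c) (x n, d)) (\<lambda>(x, y). f x y)
      = (\<Sum>k<n. integral (cbox (x k, c) (x (Suc k), d)) (\<lambda>(x, y). f x y))"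
    using step by (intro integral_cbox_Pair_eq_sum_columns int less_imp_le)
  also have "\<dots> \<le> (\<Sum>k<n. (x (Suc k) - x k) * (integral {c..d} (f (x k)) + integral {c..d} (f (x (Suc k)))) / 2)"
  proof (rule sum_mono)
    fix k assume "k \<in> {..<n}"
    then have k: "x k \<in> {x 0..x n}" "x (Suc k) \<in> {x 0..x n}"
      using lift_Suc_mono_le[of x, OF less_imp_le[OF step]] by auto
    show "integral (cbox (x k, c) (x (Suc k), d)) (\<lambda>(x, y). f x y)
        \<le> (x (Suc k) - x k) * (integral {c..d} (f (x k)) + integral {c..d} (f (x (Suc k)))) / 2"
    proof (rule integral_column_le_trapezoid[OF step \<open>c < d\<close>])
      show "\<forall>y\<in>{c..d}. convex_on {x k..x (Suc k)} (\<lambda>t. f t y)"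
        using convex_fst k by (auto intro: convex_on_subset)
      show "(\<lambda>(x, y). f x y) integrable_on cbox (x k, c) (x (Suc k), d)"
        by (rule integrable_on_subcbox[OF int]) (use k in \<open>auto simp: cbox_Pair_eq\<close>)
    qed (use k nonneg convex_snd in auto)
  qed
  finally show ?thesis .
qed

lemma integral_le_composite_trapezoid_fst:
  fixes a b c d :: real and f :: "real \<Rightarrow> real \<Rightarrow> real" and n :: nat
  assumes "a < b" "c < d" "n \<ge> 1"
    and nonneg: "\<forall>x\<in>{a..b}. \<forall>y\<in>{c..d}. 0 \<le> f x y"
    and convex_fst: "\<forall>y\<in>{c..d}. convex_on {a..b} (\<lambda>x. f x y)"
    and convex_snd: "\<forall>x\<in>{a..b}. convex_on {c..d} (\<lambda>y. f x y)"
  shows "integral (cbox (a, c) (b, d)) (\<lambda>(x, y). f x y)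
    \<le> (b - a) / n * ((integral {c..d} (\<lambda>y. f a y) + integral {c..d} (\<lambda>y. f b y)) / 2
          + (\<Sum>k = 1..n - 1. integral {c..d} (\<lambda>y. f (a + k * (b - a) / n) y)))"
proof -
  define x where "x k = a + real k * (b - a) / n" for k
  define J where "J t = integral {c..d} (\<lambda>y. f t y)" for t
  define R where "R = (b - a) / n * ((J a + J b) / 2 + (\<Sum>k = 1..n - 1. J (x k)))"
  have x_ends: "x 0 = a" "x n = b"
    using \<open>n \<ge> 1\<close> by (auto simp: x_def)
  have x_step: "x (Suc k) - x k = (b - a) / n" for k
    using \<open>n \<ge> 1\<close> by (simp add: x_def field_simps)
  have x_mono: "x k < x (Suc k)" for k
  proof -
    have "(b - a) / n > 0"
      using \<open>a < b\<close> \<open>n \<ge> 1\<close> by simp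
    then show ?thesis
      using x_step[of k] by linarith
  qed
  have "integral (cbox (a, c) (b, d)) (\<lambda>(x, y). f x y) \<le> R"
  proof (cases "(\<lambda>(x, y). f x y) integrable_on cbox (a, c) (b, d)")
    case False \<comment> \<open>then the integral is 0 by convention\<close>
    have "0 \<le> J t" if "t \<in> {a..b}" for t
      unfolding J_def using that nonneg convex_snd
      by (intro integral_nonneg convex_on_nonneg_integrable_on_Icc) auto
    then have "0 \<le> R"
      unfolding R_def x_def using \<open>a < b\<close> uniform_node_in_Icc[of a b]
      by (intro mult_nonneg_nonneg add_nonneg_nonneg divide_nonneg_nonneg sum_nonneg) auto
    with False show ?thesis
      by (simp add: not_integrable_integral)
  next
    case True
    have "integral (cbox (a, c) (b, d)) (\<lambda>(x, y). f x y) \<le> (\<Sum>k<n. (b - a) / n * ((J (x k) + J (x (Suc k))) / 2))"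
      using integral_le_trapezoid_partition_fst[of c d x n f, OF _ x_mono] True assms
      unfolding x_ends x_step J_def by simp
    also have "\<dots> = R"
      using sum_trapezoid_weights[OF \<open>n \<ge> 1\<close>, of "\<lambda>k. J (x k)"] x_ends
      unfolding R_def by (simp only: sum_distrib_left[symmetric])
    finally show ?thesis .
  qed
  then show ?thesis
    by (simp add: R_def J_def x_def)
qed

theorem theorem6:
  fixes a b c d :: real and f :: "real \<Rightarrow> real \<Rightarrow> real" and n :: nat
  assumes "a < b" and "c < d"
    and "\<forall>x\<in>{a..b}. \<forall>y\<in>{c..d}. 0 \<le> f x y"
    and "convex_on_coordinates a b c d f"
    and "n \<ge> 1"
  shows "integral (cbox (a, c) (b, d)) (\<lambda>(x, y). f x y)
    \<le> (b - a) / (4 * n) *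
        ((n + 1) * integral {c..d} (\<lambda>y. f a y)
         + (n + 1) * integral {c..d} (\<lambda>y. f b y)
         + 2 * (\<Sum>k = 1..n - 1. integral {c..d} (\<lambda>y. f (a + k * (b - a) / n) y)))
      + (d - c) / (4 * n) *
        ((n + 1) * integral {a..b} (\<lambda>x. f x c)
         + (n + 1) * integral {a..b} (\<lambda>x. f x d)
         + 2 * (\<Sum>k = 1..n - 1. integral {a..b} (\<lambda>x. f x (c + k * (d - c) / n))))"
proof -
  have convex_fst: "\<forall>y\<in>{c..d}. convex_on {a..b} (\<lambda>x. f x y)"
    and convex_snd: "\<forall>x\<in>{a..b}. convex_on {c..d} (\<lambda>y. f x y)"
    using assms(4) unfolding convex_on_coordinates_def by auto
  note trapezoid = integral_le_composite_trapezoid_fst[OF assms(1,2) _ assms(3) convex_fst convex_snd]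
  define L A B Sx where "L = integral (cbox (a, c) (b, d)) (\<lambda>(x, y). f x y)"
    and "A = integral {c..d} (\<lambda>y. f a y)" and "B = integral {c..d} (\<lambda>y. f b y)"
    and "Sx = (\<Sum>k = 1..n - 1. integral {c..d} (\<lambda>y. f (a + k * (b - a) / n) y))"
  define U V where "U = (b - a) / n * ((A + B) / 2 + Sx)" and "V = (b - a) * (A + B) / 2"
  have "L \<le> U" "L \<le> V"
    using trapezoid[OF assms(5)] trapezoid[of 1] unfolding L_def A_def B_def Sx_def U_def V_def
    by simp_all
  then have "L \<le> (U + V) / 2"
    by argo
  also have "\<dots> = (b - a) / (4 * n) * ((n + 1) * A + (n + 1) * B + 2 * Sx)"
    unfolding U_def V_def using assms(5) by (simp add: field_simps)
  finally have x_part: "L \<le> (b - a) / (4 * n) * ((n + 1) * A + (n + 1) * B + 2 * Sx)" .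
  have "0 \<le> integral {a..b} (\<lambda>x. f x y)" if "y \<in> {c..d}" for y
    using that assms(3) convex_fst by (intro integral_nonneg convex_on_nonneg_integrable_on_Icc) auto
  then have y_part: "0 \<le> (d - c) / (4 * n) *
        ((n + 1) * integral {a..b} (\<lambda>x. f x c)
         + (n + 1) * integral {a..b} (\<lambda>x. f x d)
         + 2 * (\<Sum>k = 1..n - 1. integral {a..b} (\<lambda>x. f x (c + k * (d - c) / n))))"
    using \<open>c < d\<close> uniform_node_in_Icc[of c d]
    by (intro mult_nonneg_nonneg add_nonneg_nonneg sum_nonneg) auto
  show ?thesis
    using add_increasing2[OF y_part x_part] unfolding L_def A_def B_def Sx_def .
qed

end
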